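(* Let $(A,\cdot,\alpha)$ be an anticommutative multiplicative Hom-algebra over a field $\mathbb{K}$ of characteristic $0$. Then: (i) $J_{\alpha}(x,y,z)$ is skew-symmetric in its three variables; (ii) for all $w,x,y,z\in A$, $$\alpha^{2}(w)\cdot J_{\alpha}(x,y,z)-\alpha^{2}(x)\cdot J_{\alpha}(y,z,w)+\alpha^{2}(y)\cdot J_{\alpha}(z,w,x)-\alpha^{2}(z)\cdot J_{\alpha}(w,x,y)$$ $$= J_{\alpha}(w\cdot x,\alpha(y),\alpha(z))+J_{\alpha}(y\cdot z,\alpha(w),\alpha(x))+J_{\alpha}(w\cdot y,\alpha(z),\alpha(x))+J_{\alpha}(z\cdot x,\alpha(w),\alpha(y))-J_{\alpha}(z\cdot w,\alpha(x),\alpha(y))-J_{\alpha}(x\cdot y,\alpha(z),\alpha(w)).$$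
   Context: A multiplicative Hom-algebra is a triple $(A,\cdot,\alpha)$ with $A$ a vector space over $\mathbb{K}$, $\cdot$ a bilinear product, and $\alpha:A\to A$ linear with $\alpha(x\cdot y)=\alpha(x)\cdot\alpha(y)$. Anticommutative means $x\cdot y=-y\cdot x$. The Hom-Jacobian is $J_{\alpha}(x,y,z)=(x\cdot y)\cdot\alpha(z)+(y\cdot z)\cdot\alpha(x)+(z\cdot x)\cdot\alpha(y)$. *)

theory Defs
  imports Complex_Main
begin

definition bilinear_prod :: "('k::field \<Rightarrow> 'a::ab_group_add \<Rightarrow> 'a) \<Rightarrow> ('a \<Rightarrow> 'a \<Rightarrow> 'a) \<Rightarrow> bool" where
  "bilinear_prod scale mult \<longleftrightarrow>
     (\<forall>y. Vector_Spaces.linear scale scale (\<lambda>x. mult x y)) \<and>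
     (\<forall>x. Vector_Spaces.linear scale scale (\<lambda>y. mult x y))"

definition multiplicative_hom_algebra ::
  "('k::field \<Rightarrow> 'a::ab_group_add \<Rightarrow> 'a) \<Rightarrow> ('a \<Rightarrow> 'a \<Rightarrow> 'a) \<Rightarrow> ('a \<Rightarrow> 'a) \<Rightarrow> bool" where
  "multiplicative_hom_algebra scale mult alpha \<longleftrightarrow>
     vector_space scale \<and> bilinear_prod scale mult \<and>
     Vector_Spaces.linear scale scale alpha \<and>
     (\<forall>x y. alpha (mult x y) = mult (alpha x) (alpha y))"

definition anticommutative :: "('a::ab_group_add \<Rightarrow> 'a \<Rightarrow> 'a) \<Rightarrow> bool" where
  "anticommutative mult \<longleftrightarrow> (\<forall>x y. mult x y = - mult y x)"

definition hom_jacobian :: "('a::ab_group_add \<Rightarrow> 'a \<Rightarrow> 'a) \<Rightarrow> ('a \<Rightarrow> 'a) \<Rightarrow> 'a \<Rightarrow> 'a \<Rightarrow> 'a \<Rightarrow> 'a" where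
  "hom_jacobian mult alpha x y z =
     mult (mult x y) (alpha z) + mult (mult y z) (alpha x) + mult (mult z x) (alpha y)"

end

theory Submission
  imports Defs
begin

text \<open>Skew-symmetry of \<open>J\<^sub>\<alpha>\<close> is immediate from
  anticommutativity. For the identity, expand
  \<open>J\<^sub>\<alpha>(a\<cdot>b, \<alpha> c, \<alpha> d) = ((a\<cdot>b)\<cdot>\<alpha> c)\<cdot>\<alpha>\<^sup>2 d - ((a\<cdot>b)\<cdot>\<alpha> d)\<cdot>\<alpha>\<^sup>2 c + (\<alpha> c\<cdot>\<alpha> d)\<cdot>(\<alpha> a\<cdot>\<alpha> b)\<close>:
  the six products of products on the right cancel in pairs, and the twelve remaining terms
  are, up to anticommutativity of the inner factors, the twelve terms of the left-hand side.\<close>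

locale anticommutative_hom_algebra =
  fixes mult :: "'a::ab_group_add \<Rightarrow> 'a \<Rightarrow> 'a" (infixl \<open>\<cdot>\<close> 70)
    and \<alpha> :: "'a \<Rightarrow> 'a"
  assumes additive_left: "additive (\<lambda>x. x \<cdot> y)"
    and anticomm: "x \<cdot> y = - (y \<cdot> x)"
    and hom_mult: "\<alpha> (x \<cdot> y) = \<alpha> x \<cdot> \<alpha> y"
begin

lemma mult_add_left: "(a + b) \<cdot> c = a \<cdot> c + b \<cdot> c"
  and mult_minus_left: "(- a) \<cdot> c = - (a \<cdot> c)"
  using additive_left [of c] by (auto intro: additive.add additive.minus)

abbreviation J where "J \<equiv> hom_jacobian (\<cdot>) \<alpha>"

lemma hom_jacobian_swap_12: "J x y z = - J y x z"
  and hom_jacobian_swap_23: "J x y z = - J x z y"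
  and hom_jacobian_swap_13: "J x y z = - J z y x"
  unfolding hom_jacobian_def
  by (simp_all add: anticomm [of x y] anticomm [of y z] anticomm [of z x] mult_minus_left)

lemma hom_jacobian_of_mult:
  "J (a \<cdot> b) (\<alpha> c) (\<alpha> d)
     = ((a \<cdot> b) \<cdot> \<alpha> c) \<cdot> \<alpha> (\<alpha> d) - ((a \<cdot> b) \<cdot> \<alpha> d) \<cdot> \<alpha> (\<alpha> c) + (\<alpha> c \<cdot> \<alpha> d) \<cdot> (\<alpha> a \<cdot> \<alpha> b)"
  unfolding hom_jacobian_def hom_mult
  by (simp add: anticomm [of "\<alpha> d" "a \<cdot> b"] mult_minus_left)

lemma mult_hom_jacobian:
  "\<alpha> (\<alpha> w) \<cdot> J x y z
     = - (((x \<cdot> y) \<cdot> \<alpha> z) \<cdot> \<alpha> (\<alpha> w) + ((y \<cdot> z) \<cdot> \<alpha> x) \<cdot> \<alpha> (\<alpha> w)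
          + ((z \<cdot> x) \<cdot> \<alpha> y) \<cdot> \<alpha> (\<alpha> w))"
  by (subst anticomm) (simp add: hom_jacobian_def mult_add_left)

lemma hom_jacobian_identity:
  "\<alpha> (\<alpha> w) \<cdot> J x y z - \<alpha> (\<alpha> x) \<cdot> J y z w + \<alpha> (\<alpha> y) \<cdot> J z w x - \<alpha> (\<alpha> z) \<cdot> J w x y
     = J (w \<cdot> x) (\<alpha> y) (\<alpha> z) + J (y \<cdot> z) (\<alpha> w) (\<alpha> x) + J (w \<cdot> y) (\<alpha> z) (\<alpha> x)
       + J (z \<cdot> x) (\<alpha> w) (\<alpha> y) - J (z \<cdot> w) (\<alpha> x) (\<alpha> y) - J (x \<cdot> y) (\<alpha> z) (\<alpha> w)"
proof -
  have cancel: "(\<alpha> a \<cdot> \<alpha> b) \<cdot> (\<alpha> c \<cdot> \<alpha> d) + (\<alpha> c \<cdot> \<alpha> d) \<cdot> (\<alpha> a \<cdot> \<alpha> b) = 0" for a b c d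
    by (simp add: anticomm [of "\<alpha> a \<cdot> \<alpha> b"])
  have "w \<cdot> y = - (y \<cdot> w)" "x \<cdot> z = - (z \<cdot> x)" "z \<cdot> w = - (w \<cdot> z)"
    by (rule anticomm)+
  then show ?thesis
    unfolding hom_jacobian_of_mult mult_hom_jacobian
    using cancel [of w x y z] cancel [of w y z x] cancel [of x y z w]
    by (simp add: mult_minus_left algebra_simps)
qed

end

theorem lemma2p4:
  fixes scale :: "'k::field_char_0 \<Rightarrow> 'a::ab_group_add \<Rightarrow> 'a"
    and mult :: "'a \<Rightarrow> 'a \<Rightarrow> 'a"
    and alpha :: "'a \<Rightarrow> 'a"
  assumes "multiplicative_hom_algebra scale mult alpha"
    and "anticommutative mult"
  defines "J \<equiv> hom_jacobian mult alpha"
  shows "(\<forall>x y z. J x y z = - J y x z \<and> J x y z = - J x z y \<and> J x y z = - J z y x)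
    \<and> (\<forall>w x y z.
        mult (alpha (alpha w)) (J x y z) - mult (alpha (alpha x)) (J y z w)
        + mult (alpha (alpha y)) (J z w x) - mult (alpha (alpha z)) (J w x y)
      = J (mult w x) (alpha y) (alpha z) + J (mult y z) (alpha w) (alpha x)
        + J (mult w y) (alpha z) (alpha x) + J (mult z x) (alpha w) (alpha y)
        - J (mult z w) (alpha x) (alpha y) - J (mult x y) (alpha z) (alpha w))"
proof -
  interpret anticommutative_hom_algebra mult alpha
  proof unfold_locales
    show "mult (a + b) c = mult a c + mult b c" for a b c
      using assms(1) unfolding multiplicative_hom_algebra_def bilinear_prod_def
        Vector_Spaces.linear_iff by blast
    show "mult x y = - mult y x" for x y
      using assms(2) unfolding anticommutative_def by blast
    show "alpha (mult x y) = mult (alpha x) (alpha y)" for x y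
      using assms(1) unfolding multiplicative_hom_algebra_def by blast
  qed
  show ?thesis
    unfolding J_def
    using hom_jacobian_swap_12 hom_jacobian_swap_23 hom_jacobian_swap_13 hom_jacobian_identity
    by blast
qed

end
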